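(* Let $(\mathbb{X},\oplus,\otimes,\mathbb{0},\mathbb{1})$ be a linearly ordered, algebraically complete idempotent semifield, let $\bm{A}_1,\ldots,\bm{A}_m\in\mathbb{X}^{n\times n}$ be reciprocal matrices (i.e. $\bm{A}_i^{-}=\bm{A}_i$) and $w_1,\ldots,w_m\in\mathbb{X}$ scalars such that $\bm{B}=w_1\bm{A}_1\oplus\cdots\oplus w_m\bm{A}_m$ has no zero entries. Let $\mu$ be the spectral radius of $\bm{B}$ and $\bm{B}_{\mu}=\mu^{-1}\bm{B}$. Consider the problem of minimizing $\max_{1\le i\le m} w_i\, d(\bm{A}_i,\bm{x}\bm{x}^{-})$ (i.e. $\bigoplus_{i=1}^m w_i d(\bm{A}_i,\bm{x}\bm{x}^{-})$) over all regular vectors $\bm{x}\in\mathbb{X}^n$. Then the minimum value equals $\mu$, and the set of all solutions is $\{\bm{x}=\bm{B}_{\mu}^{\ast}\bm{u}:\bm{u}\in\mathbb{X}^n,\ \bm{u}\ne\bm{0}\}$.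
   Context: An idempotent semifield is a set $\mathbb{X}$ with associative, commutative operations $\oplus$ (addition) and $\otimes$ (multiplication, usually omitted in writing) with neutral elements $\mathbb{0}$ and $\mathbb{1}$, multiplication distributing over addition, idempotent addition ($x\oplus x=x$), and every nonzero $x$ having an inverse $x^{-1}$ with $xx^{-1}=\mathbb{1}$. It is assumed linearly ordered by the order $x\le y \iff x\oplus y=y$, and algebraically complete: $x^p=a$ is solvable for every $a$ and integer $p>0$, so rational powers are defined. Matrix and vector operations (including scalar multiplication) use the usual formulas with $\oplus,\otimes$ in place of $+,\times$; $\bm{0}$ is the zero vector; a vector is regular if it has no zero entries. For a nonzero column vector $\bm{x}=(x_i)$, $\bm{x}^{-}$ is the row vector with entries $x_i^{-1}$ if $x_i\ne\mathbb{0}$ and $\mathbb{0}$ otherwise. For a nonzero matrix $\bm{A}=(a_{ij})$, $\bm{A}^{-}=(a^{-}_{ij})$ with $a^{-}_{ij}=a_{ji}^{-1}$ if $a_{ji}\neq\mathbb{0}$ and $\mathbb{0}$ otherwise. The trace is $\mathrm{tr}\,\bm{A}=a_{11}\oplus\cdots\oplus a_{nn}$. The distance between square matrices is $d(\bm{A},\bm{B})=\mathrm{tr}(\bm{B}^{-}\bm{A})\oplus\mathrm{tr}(\bm{A}^{-}\bm{B})$. $\bm{I}$ is the identity matrix, $\bm{A}^0=\bm{I}$, $\bm{A}^p=\bm{A}^{p-1}\bm{A}$. The spectral radius of $\bm{A}$ of order $n$ is $\lambda=\bigoplus_{k=1}^{n}\bigoplus_{1\le i_1,\ldots,i_k\le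 n}(a_{i_1i_2}a_{i_2i_3}\cdots a_{i_ki_1})^{1/k}$. For a square matrix $\bm{M}$ of order $n$, $\bm{M}^{\ast}=\bm{I}\oplus\bm{M}\oplus\cdots\oplus\bm{M}^{n-1}$. *)

theory Defs
  imports Main
begin

text \<open>Addition (+) plays the role of the idempotent addition, (*) of the multiplication,
  0 and 1 are the neutral elements; the order is the canonical one (x \<le> y iff x + y = y).\<close>

class lin_idem_semifield = comm_semiring_1 + inverse + linorder +
  assumes add_idem: "x + x = x"
  assumes le_iff_add: "x \<le> y \<longleftrightarrow> x + y = y"
  assumes right_inverse_nz: "x \<noteq> 0 \<Longrightarrow> x * inverse x = 1"
  assumes alg_complete: "0 < p \<Longrightarrow> \<exists>x. x ^ p = a"

context lin_idem_semifield
begin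

text \<open>k-th root (unique solution of x^k = a; exists by algebraic completeness).\<close>
definition sroot :: "nat \<Rightarrow> 'a \<Rightarrow> 'a" where
  "sroot k a = (THE x. x ^ k = a)"

end

definition mmult :: "('n::finite \<Rightarrow> 'n \<Rightarrow> 'a::lin_idem_semifield) \<Rightarrow> ('n \<Rightarrow> 'n \<Rightarrow> 'a) \<Rightarrow> ('n \<Rightarrow> 'n \<Rightarrow> 'a)" where
  "mmult A B = (\<lambda>i j. \<Sum>k\<in>UNIV. A i k * B k j)"

definition mvmult :: "('n::finite \<Rightarrow> 'n \<Rightarrow> 'a::lin_idem_semifield) \<Rightarrow> ('n \<Rightarrow> 'a) \<Rightarrow> ('n \<Rightarrow> 'a)" where
  "mvmult A x = (\<lambda>i. \<Sum>j\<in>UNIV. A i j * x j)"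

definition smult :: "'a::lin_idem_semifield \<Rightarrow> ('n \<Rightarrow> 'n \<Rightarrow> 'a) \<Rightarrow> ('n \<Rightarrow> 'n \<Rightarrow> 'a)" where
  "smult c A = (\<lambda>i j. c * A i j)"

definition mident :: "'n \<Rightarrow> 'n \<Rightarrow> 'a::lin_idem_semifield" where
  "mident = (\<lambda>i j. if i = j then 1 else 0)"

fun mpow :: "('n::finite \<Rightarrow> 'n \<Rightarrow> 'a::lin_idem_semifield) \<Rightarrow> nat \<Rightarrow> ('n \<Rightarrow> 'n \<Rightarrow> 'a)" where
  "mpow A 0 = mident"
| "mpow A (Suc p) = mmult (mpow A p) A"

definition mstar :: "('n::finite \<Rightarrow> 'n \<Rightarrow> 'a::lin_idem_semifield) \<Rightarrow> ('n \<Rightarrow> 'n \<Rightarrow> 'a)" where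
  "mstar M = (\<lambda>i j. \<Sum>k<card (UNIV :: 'n set). mpow M k i j)"

definition mpinv :: "('n \<Rightarrow> 'n \<Rightarrow> 'a::lin_idem_semifield) \<Rightarrow> ('n \<Rightarrow> 'n \<Rightarrow> 'a)" where
  "mpinv A = (\<lambda>i j. if A j i \<noteq> 0 then inverse (A j i) else 0)"

definition vpinv :: "('n \<Rightarrow> 'a::lin_idem_semifield) \<Rightarrow> ('n \<Rightarrow> 'a)" where
  "vpinv x = (\<lambda>i. if x i \<noteq> 0 then inverse (x i) else 0)"

definition outer_pinv :: "('n \<Rightarrow> 'a::lin_idem_semifield) \<Rightarrow> ('n \<Rightarrow> 'n \<Rightarrow> 'a)" where
  "outer_pinv x = (\<lambda>i j. x i * vpinv x j)"

definition mtrace :: "('n::finite \<Rightarrow> 'n \<Rightarrow> 'a::lin_idem_semifield) \<Rightarrow> 'a" where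
  "mtrace A = (\<Sum>i\<in>UNIV. A i i)"

definition mdist :: "('n::finite \<Rightarrow> 'n \<Rightarrow> 'a::lin_idem_semifield) \<Rightarrow> ('n \<Rightarrow> 'n \<Rightarrow> 'a) \<Rightarrow> 'a" where
  "mdist A B = mtrace (mmult (mpinv B) A) + mtrace (mmult (mpinv A) B)"

definition regular :: "('n \<Rightarrow> 'a::lin_idem_semifield) \<Rightarrow> bool" where
  "regular x \<longleftrightarrow> (\<forall>i. x i \<noteq> 0)"

definition spec_rad :: "('n::finite \<Rightarrow> 'n \<Rightarrow> 'a::lin_idem_semifield) \<Rightarrow> 'a" where
  "spec_rad A = (\<Sum>k\<in>{1..card (UNIV :: 'n set)}. \<Sum>is\<in>{is :: 'n list. length is = k}.
      sroot k (\<Prod>j<k. A (is ! j) (is ! ((j + 1) mod k))))"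

end

theory Submission imports Defs begin

text \<open>
  For reciprocal \<open>A\<close> and regular \<open>x\<close> both traces in \<open>d(A, x x\<^sup>-)\<close> equal \<open>x\<^sup>- A x\<close>, so the
  objective is the quadratic form \<open>x\<^sup>- B x\<close>, the maximum of \<open>x\<^sub>r\<^sup>-\<^sup>1 b\<^sub>r\<^sub>c x\<^sub>c\<close> over all \<open>r, c\<close>.
  Multiplying the bounds \<open>b\<^sub>r\<^sub>c \<le> (x\<^sup>- B x) x\<^sub>r x\<^sub>c\<^sup>-\<^sup>1\<close> around a cycle, the entries of \<open>x\<close> telescope away, so every cycle mean of \<open>B\<close>, and
  hence \<open>\<mu>\<close>, is at most \<open>x\<^sup>- B x\<close>; and \<open>x\<^sup>- B x \<le> \<mu>\<close> says exactly \<open>B\<^sub>\<mu> x \<le> x\<close>.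
  All cycles of \<open>B\<^sub>\<mu>\<close> have weight at most \<open>\<one>\<close>, so a walk of length \<open>n\<close> can be shortened by
  cutting out a cycle; this gives \<open>B\<^sub>\<mu> B\<^sub>\<mu>\<^sup>* \<le> B\<^sub>\<mu>\<^sup>*\<close>, so every \<open>B\<^sub>\<mu>\<^sup>* u\<close> with \<open>u \<noteq> \<zero>\<close>
  attains \<open>\<mu>\<close>, while every \<open>x\<close> with \<open>B\<^sub>\<mu> x \<le> x\<close> satisfies \<open>x = B\<^sub>\<mu>\<^sup>* x\<close>.
\<close>

context lin_idem_semifield
begin

lemma add_eq_max: "x + y = max x y"
  by (metis add_commute le_iff_add max.absorb1 max.absorb2 nle_le)

lemma zero_least: "0 \<le> x"
  by (simp add: le_iff_add)

subclass ordered_comm_semiring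
proof
  fix a b c :: 'a
  show "a \<le> b \<Longrightarrow> c + a \<le> c + b" by (auto simp: add_eq_max intro: max.coboundedI2)
  assume "a \<le> b"
  then have "c * a + c * b = c * b" by (metis le_iff_add distrib_left)
  then show "c * a \<le> c * b" by (simp add: le_iff_add)
qed

subclass ordered_semiring_1
  by standard (use zero_least[of 1] in \<open>simp add: order.order_iff_strict\<close>)

lemma left_inverse_nz: "x \<noteq> 0 \<Longrightarrow> inverse x * x = 1"
  using right_inverse_nz by (simp add: mult.commute)

lemma inverse_unique: "a * b = 1 \<Longrightarrow> b = inverse a"
  by (metis mult.assoc mult.commute mult_1_right mult_zero_left right_inverse_nz zero_neq_one)

lemma inverse_nonzero: "x \<noteq> 0 \<Longrightarrow> inverse x \<noteq> 0"
  using right_inverse_nz[of x] by (metis mult_zero_right zero_neq_one)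

subclass semiring_1_no_zero_divisors
proof
  fix a b :: 'a
  assume "a \<noteq> 0" "b \<noteq> 0"
  show "a * b \<noteq> 0"
  proof
    assume "a * b = 0"
    then have "inverse a * (a * b) = 0" by simp
    with \<open>a \<noteq> 0\<close> \<open>b \<noteq> 0\<close> show False by (simp add: mult.assoc[symmetric] left_inverse_nz)
  qed
qed

lemma inverse_inverse_nz: "x \<noteq> 0 \<Longrightarrow> inverse (inverse x) = x"
  by (metis inverse_unique left_inverse_nz)

lemma inverse_mult_nz: "x \<noteq> 0 \<Longrightarrow> y \<noteq> 0 \<Longrightarrow> inverse (x * y) = inverse x * inverse y"
  by (rule inverse_unique[symmetric]) (simp add: ac_simps right_inverse_nz mult.left_commute[of y])

lemma mult_left_le_cancel_nz: "c \<noteq> 0 \<Longrightarrow> c * a \<le> c * b \<longleftrightarrow> a \<le> b"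
proof
  assume "c \<noteq> 0" "c * a \<le> c * b"
  then have "inverse c * (c * a) \<le> inverse c * (c * b)" by (simp add: mult_left_mono zero_least)
  with \<open>c \<noteq> 0\<close> show "a \<le> b" by (simp add: mult.assoc[symmetric] left_inverse_nz)
qed (simp add: mult_left_mono zero_least)

lemma power_strict_mono_nz: "y < x \<Longrightarrow> 0 < k \<Longrightarrow> y ^ k < x ^ k"
proof -
  assume "y < x" "0 < k"
  then obtain k' where k: "k = Suc k'" and x: "x \<noteq> 0" by (metis gr0_implies_Suc leD zero_least)
  show ?thesis
  proof (cases "y = 0")
    case True
    have "0 < x ^ k" using power_not_zero[OF x] zero_least[of "x ^ k"] by (metis order.order_iff_strict)
    with True show ?thesis by (simp add: k)
  next
    case False
    have "y * y ^ k' < x * y ^ k'"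
      using \<open>y < x\<close> mult_left_le_cancel_nz[of "y ^ k'" x y] False
      by (simp add: mult.commute less_le_not_le)
    also have "\<dots> \<le> x * x ^ k'"
      using \<open>y < x\<close> by (simp add: mult_left_mono power_mono zero_least)
    finally show ?thesis by (simp add: k)
  qed
qed

lemma power_le_power_imp_le: "x ^ k \<le> y ^ k \<Longrightarrow> 0 < k \<Longrightarrow> x \<le> y"
  using power_strict_mono_nz[of y x k] by (meson leD le_less_linear)

lemma sroot_power: "0 < k \<Longrightarrow> sroot k a ^ k = a"
proof -
  assume k: "0 < k"
  obtain x where "x ^ k = a" using alg_complete[OF k] by blast
  then have "\<exists>!x. x ^ k = a"
    using power_le_power_imp_le[OF _ k] by (metis order.antisym order.refl)
  then show ?thesis unfolding sroot_def by (rule theI')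
qed

lemma sroot_le_iff: "0 < k \<Longrightarrow> sroot k a \<le> y \<longleftrightarrow> a \<le> y ^ k"
  by (metis power_le_power_imp_le power_mono sroot_power zero_least)

lemma sum_le_iff: "finite S \<Longrightarrow> sum f S \<le> c \<longleftrightarrow> (\<forall>x\<in>S. f x \<le> c)"
  by (induct S rule: finite_induct) (auto simp: add_eq_max zero_least)

lemma le_sum_member: "finite S \<Longrightarrow> x \<in> S \<Longrightarrow> f x \<le> sum f S"
  by (simp add: sum.remove add_eq_max)

lemma sum_attained: "finite S \<Longrightarrow> S \<noteq> {} \<Longrightarrow> \<exists>x\<in>S. sum f S = f x"
proof (induct S rule: finite_ne_induct)
  case (insert x F)
  then obtain y where "y \<in> F" "sum f F = f y" by blast
  with insert show ?case by (auto simp: add_eq_max max_def)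
qed simp

lemma prod_mono_nonneg: "(\<And>i. i \<in> S \<Longrightarrow> f i \<le> g i) \<Longrightarrow> prod f S \<le> prod g S"
  by (induct S rule: infinite_finite_induct) (simp_all add: mult_mono zero_least)

end

definition walk_weight :: "('n \<Rightarrow> 'n \<Rightarrow> 'a::lin_idem_semifield) \<Rightarrow> (nat \<Rightarrow> 'n) \<Rightarrow> nat \<Rightarrow> 'a" where
  "walk_weight M f k = (\<Prod>t<k. M (f t) (f (Suc t)))"

lemma walk_weight_Suc: "walk_weight M f (Suc k) = walk_weight M f k * M (f k) (f (Suc k))"
  by (simp add: walk_weight_def mult.commute)

lemma walk_weight_add: "walk_weight M f (a + k) = walk_weight M f a * walk_weight M (\<lambda>t. f (t + a)) k"
  by (induct k) (simp_all add: walk_weight_Suc walk_weight_def mult.assoc add.commute)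

lemma walk_weight_cong: "(\<And>t. t \<le> k \<Longrightarrow> f t = g t) \<Longrightarrow> walk_weight M f k = walk_weight M g k"
  unfolding walk_weight_def by (rule prod.cong) auto

lemma walk_weight_le_mpow: "walk_weight M f k \<le> mpow M k (f 0) (f k)"
proof (induct k)
  case 0
  then show ?case by (simp add: walk_weight_def mident_def)
next
  case (Suc k)
  have "walk_weight M f (Suc k) \<le> mpow M k (f 0) (f k) * M (f k) (f (Suc k))"
    unfolding walk_weight_Suc using Suc by (simp add: mult_right_mono zero_least)
  also have "\<dots> \<le> mpow M (Suc k) (f 0) (f (Suc k))"
    unfolding mpow.simps mmult_def by (rule le_sum_member) simp_all
  finally show ?case .
qed

text \<open>In the max-times setting the sums in a matrix power are attained: every nonzero entry
  of \<open>M\<^sup>k\<close> is the weight of a single walk.\<close>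

lemma mpow_eq_walk_weight:
  fixes M :: "'n::finite \<Rightarrow> 'n \<Rightarrow> 'a::lin_idem_semifield"
  assumes "mpow M k i j \<noteq> 0"
  shows "\<exists>f. f 0 = i \<and> f k = j \<and> mpow M k i j = walk_weight M f k"
  using assms
proof (induct k arbitrary: j)
  case 0
  then show ?case by (auto simp: mident_def walk_weight_def split: if_splits intro!: exI[of _ "\<lambda>_. i"])
next
  case (Suc k)
  obtain l where l: "mpow M (Suc k) i j = mpow M k i l * M l j"
    using sum_attained[of "UNIV :: 'n set" "\<lambda>l. mpow M k i l * M l j"] by (auto simp: mmult_def)
  with Suc.prems obtain f where f: "f 0 = i" "f k = l" "mpow M k i l = walk_weight M f k"
    using Suc.hyps by fastforce
  define g where "g = f(Suc k := j)"
  have "walk_weight M g k = walk_weight M f k" by (rule walk_weight_cong) (simp add: g_def)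
  then have "mpow M (Suc k) i j = walk_weight M g (Suc k)"
    unfolding walk_weight_Suc l using f by (simp add: g_def)
  moreover have "g 0 = i" "g (Suc k) = j" using f by (simp_all add: g_def)
  ultimately show ?case by metis
qed

lemma mult_mpow_le_mpow_Suc: "M r c * mpow M k c j \<le> mpow M (Suc k) r j"
proof (cases "mpow M k c j = 0")
  case False
  then obtain f where f: "f 0 = c" "f k = j" "mpow M k c j = walk_weight M f k"
    using mpow_eq_walk_weight by blast
  define g where "g t = (if t = 0 then r else f (t - 1))" for t
  have "M r c * mpow M k c j = walk_weight M g (Suc k)"
    unfolding walk_weight_def prod.lessThan_Suc_shift using f by (simp add: g_def walk_weight_def)
  also have "\<dots> \<le> mpow M (Suc k) r j" using walk_weight_le_mpow[of M g "Suc k"] f by (simp add: g_def)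
  finally show ?thesis .
qed (simp add: zero_least)

lemma walk_weight_remove_cycle:
  assumes ab: "a \<le> b" "b \<le> k" "f a = f b"
    and cycle: "walk_weight M (\<lambda>t. f (t + a)) (b - a) \<le> 1"
  shows "walk_weight M f k \<le> mpow M (k - (b - a)) (f 0) (f k)"
proof -
  define h where "h t = (if t \<le> a then f t else f (t + (b - a)))" for t
  have k: "k = a + ((b - a) + (k - b))" using ab by simp
  have "walk_weight M f k
      = walk_weight M f a * (walk_weight M (\<lambda>t. f (t + a)) (b - a) * walk_weight M (\<lambda>t. f (t + b)) (k - b))"
    by (subst k, simp only: walk_weight_add) (use ab in \<open>simp add: add.commute add.left_commute\<close>)
  also have "\<dots> \<le> walk_weight M f a * (1 * walk_weight M (\<lambda>t. f (t + b)) (k - b))"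
    using cycle by (intro mult_left_mono mult_right_mono zero_least)
  also have "\<dots> = walk_weight M h a * walk_weight M (\<lambda>t. h (t + a)) (k - b)"
  proof -
    have "walk_weight M f a = walk_weight M h a" by (rule walk_weight_cong) (simp add: h_def)
    moreover have "(\<lambda>t. f (t + b)) = (\<lambda>t. h (t + a))"
      using ab by (auto simp: h_def fun_eq_iff)
    ultimately show ?thesis by simp
  qed
  also have "\<dots> = walk_weight M h (k - (b - a))"
    using walk_weight_add[of M h a "k - b"] ab by (simp add: add.commute)
  also have "\<dots> \<le> mpow M (k - (b - a)) (h 0) (h (k - (b - a)))" by (rule walk_weight_le_mpow)
  also have "h 0 = f 0" by (simp add: h_def)
  also have "h (k - (b - a)) = f k" using ab by (cases "k = b") (auto simp: h_def)
  finally show ?thesis .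
qed

definition cycle_weight :: "('n \<Rightarrow> 'n \<Rightarrow> 'a::lin_idem_semifield) \<Rightarrow> 'n list \<Rightarrow> 'a" where
  "cycle_weight M is = (\<Prod>j<length is. M (is ! j) (is ! ((j + 1) mod length is)))"

lemma finite_lists_length: "finite {is :: 'n::finite list. length is = k}"
  using finite_lists_length_eq[of "UNIV :: 'n set" k] by simp

lemma spec_rad_le_iff:
  fixes M :: "'n::finite \<Rightarrow> 'n \<Rightarrow> 'a::lin_idem_semifield"
  shows "spec_rad M \<le> r \<longleftrightarrow>
    (\<forall>is. length is \<in> {1..card (UNIV :: 'n set)} \<longrightarrow> cycle_weight M is \<le> r ^ length is)"
proof -
  have "spec_rad M = (\<Sum>k\<in>{1..card (UNIV :: 'n set)}. \<Sum>is\<in>{is :: 'n list. length is = k}.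
      sroot (length is) (cycle_weight M is))"
    unfolding spec_rad_def cycle_weight_def by (intro sum.cong) auto
  then show ?thesis by (auto simp: sum_le_iff finite_lists_length sroot_le_iff)
qed

lemma cycle_weight_le_spec_rad:
  fixes M :: "'n::finite \<Rightarrow> 'n \<Rightarrow> 'a::lin_idem_semifield"
  shows "length is \<in> {1..card (UNIV :: 'n set)} \<Longrightarrow> cycle_weight M is \<le> spec_rad M ^ length is"
  using spec_rad_le_iff[of M "spec_rad M"] by blast

lemma closed_walk_weight_eq_cycle_weight:
  assumes "f 0 = f L"
  shows "walk_weight M f L = cycle_weight M (map f [0..<L])"
  unfolding walk_weight_def cycle_weight_def
proof (rule prod.cong)
  fix j assume "j \<in> {..<length (map f [0..<L])}"
  then have j: "j < L" by simp
  then have "map f [0..<L] ! ((j + 1) mod L) = f (Suc j)"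
    using assms by (cases "Suc j = L") auto
  with j show "M (f j) (f (Suc j)) = M (map f [0..<L] ! j) (map f [0..<L] ! ((j + 1) mod length (map f [0..<L])))"
    by simp
qed simp

lemma closed_walk_weight_le_spec_rad:
  fixes M :: "'n::finite \<Rightarrow> 'n \<Rightarrow> 'a::lin_idem_semifield"
  assumes "f 0 = f L" "0 < L" "L \<le> card (UNIV :: 'n set)"
  shows "walk_weight M f L \<le> spec_rad M ^ L"
  using cycle_weight_le_spec_rad[of "map f [0..<L]" M] assms
  by (simp add: closed_walk_weight_eq_cycle_weight)

lemma diag_le_spec_rad:
  fixes M :: "'n::finite \<Rightarrow> 'n \<Rightarrow> 'a::lin_idem_semifield"
  shows "M i i \<le> spec_rad M"
  using cycle_weight_le_spec_rad[of "[i]" M]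
  by (simp add: cycle_weight_def Suc_le_eq finite_UNIV_card_ge_0)

lemma cycle_weight_smult: "cycle_weight (smult c M) is = c ^ length is * cycle_weight M is"
  by (simp add: cycle_weight_def smult_def prod.distrib)

lemma spec_rad_normalized_le_one:
  fixes M :: "'n::finite \<Rightarrow> 'n \<Rightarrow> 'a::lin_idem_semifield"
  assumes "spec_rad M \<noteq> 0"
  shows "spec_rad (smult (inverse (spec_rad M)) M) \<le> 1"
  unfolding spec_rad_le_iff
proof (intro allI impI)
  fix "is" :: "'n list"
  assume "length is \<in> {1..card (UNIV :: 'n set)}"
  then have "cycle_weight M is \<le> spec_rad M ^ length is"
    by (rule cycle_weight_le_spec_rad)
  then have "inverse (spec_rad M) ^ length is * cycle_weight M is
      \<le> (inverse (spec_rad M) * spec_rad M) ^ length is"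
    by (simp add: power_mult_distrib mult_left_mono zero_least)
  then show "cycle_weight (smult (inverse (spec_rad M)) M) is \<le> 1 ^ length is"
    by (simp add: cycle_weight_smult left_inverse_nz assms)
qed

text \<open>The factors \<open>x\<^sub>r\<^sup>-\<^sup>1\<close> and \<open>x\<^sub>c\<close> telescope around the cycle.\<close>

lemma cycle_weight_diag_conj:
  assumes x: "regular x"
  shows "cycle_weight (\<lambda>r c. inverse (x r) * M r c * x c) is = cycle_weight M is"
proof (cases "is = []")
  case False
  let ?k = "length is"
  have rot: "(\<Prod>j<?k. x (is ! ((j + 1) mod ?k))) = (\<Prod>j<?k. x (is ! j))"
  proof -
    obtain k' where k: "?k = Suc k'" using False by (cases "is") auto
    have "(\<Prod>j<?k. x (is ! ((j + 1) mod ?k))) = (\<Prod>j<k'. x (is ! Suc j)) * x (is ! 0)"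
      unfolding k by (simp add: mult.commute)
    also have "\<dots> = (\<Prod>j<?k. x (is ! j))"
      unfolding k prod.lessThan_Suc_shift by (simp add: mult.commute)
    finally show ?thesis .
  qed
  have "cycle_weight (\<lambda>r c. inverse (x r) * M r c * x c) is
      = (\<Prod>j<?k. inverse (x (is ! j))) * (\<Prod>j<?k. x (is ! ((j + 1) mod ?k))) * cycle_weight M is"
    by (simp add: cycle_weight_def prod.distrib ac_simps)
  also have "\<dots> = (\<Prod>j<?k. inverse (x (is ! j)) * x (is ! j)) * cycle_weight M is"
    by (simp only: rot prod.distrib)
  also have "\<dots> = cycle_weight M is"
    using x by (simp add: regular_def left_inverse_nz)
  finally show ?thesis .
qed (simp add: cycle_weight_def)

subsection \<open>The Kleene star\<close>

lemma mpow_le_mstar: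
  fixes M :: "'n::finite \<Rightarrow> 'n \<Rightarrow> 'a::lin_idem_semifield"
  shows "k < card (UNIV :: 'n set) \<Longrightarrow> mpow M k i j \<le> mstar M i j"
  unfolding mstar_def by (rule le_sum_member) auto

lemma mpow_card_le_mstar:
  fixes M :: "'n::finite \<Rightarrow> 'n \<Rightarrow> 'a::lin_idem_semifield"
  assumes rad: "spec_rad M \<le> 1"
  shows "mpow M (card (UNIV :: 'n set)) i j \<le> mstar M i j"
proof (cases "mpow M (card (UNIV :: 'n set)) i j = 0")
  case False
  let ?n = "card (UNIV :: 'n set)"
  obtain f where f: "f 0 = i" "f ?n = j" "mpow M ?n i j = walk_weight M f ?n"
    using mpow_eq_walk_weight[OF False] by blast
  have "\<not> inj_on f {..?n}"
  proof
    assume "inj_on f {..?n}"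
    then have "card (f ` {..?n}) = Suc ?n" by (simp add: card_image)
    moreover have "card (f ` {..?n}) \<le> ?n" by (rule card_mono) auto
    ultimately show False by simp
  qed
  then obtain a b where ab: "a < b" "b \<le> ?n" "f a = f b"
    unfolding inj_on_def by (metis atMost_iff linorder_neqE_nat)
  have "walk_weight M (\<lambda>t. f (t + a)) (b - a) \<le> spec_rad M ^ (b - a)"
    by (rule closed_walk_weight_le_spec_rad) (use ab in auto)
  also have "\<dots> \<le> 1" using rad by (simp add: power_le_one zero_least)
  finally have "mpow M ?n i j \<le> mpow M (?n - (b - a)) i j"
    using walk_weight_remove_cycle[of a b ?n f M] ab f by simp
  also have "\<dots> \<le> mstar M i j" by (rule mpow_le_mstar) (use ab in auto)
  finally show ?thesis .
qed (simp add: zero_least)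

lemma mult_mstar_le_mstar:
  fixes M :: "'n::finite \<Rightarrow> 'n \<Rightarrow> 'a::lin_idem_semifield"
  assumes "spec_rad M \<le> 1"
  shows "M r c * mstar M c j \<le> mstar M r j"
  unfolding mstar_def sum_distrib_left
proof (subst sum_le_iff, simp, intro ballI)
  fix k assume "k \<in> {..<card (UNIV :: 'n set)}"
  then have k: "k < card (UNIV :: 'n set)" by simp
  have "M r c * mpow M k c j \<le> mpow M (Suc k) r j" by (rule mult_mpow_le_mpow_Suc)
  also have "\<dots> \<le> mstar M r j"
  proof (cases "Suc k < card (UNIV :: 'n set)")
    case True
    then show ?thesis by (rule mpow_le_mstar)
  next
    case False
    with k have "Suc k = card (UNIV :: 'n set)" by simp
    then show ?thesis using mpow_card_le_mstar[OF assms, of r j] by (simp only:)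
  qed
  finally show "M r c * mpow M k c j \<le> (\<Sum>k<card (UNIV :: 'n set). mpow M k r j)"
    unfolding mstar_def .
qed

lemma mvmult_le_iff:
  fixes C :: "'n::finite \<Rightarrow> 'n \<Rightarrow> 'a::lin_idem_semifield"
  shows "mvmult C x \<le> x \<longleftrightarrow> (\<forall>r c. C r c * x c \<le> x r)"
  by (simp add: le_fun_def mvmult_def sum_le_iff)

lemma mvmult_mstar_le:
  fixes M :: "'n::finite \<Rightarrow> 'n \<Rightarrow> 'a::lin_idem_semifield"
  assumes "spec_rad M \<le> 1"
  shows "mvmult M (mvmult (mstar M) u) \<le> mvmult (mstar M) u"
  unfolding mvmult_le_iff
proof (intro allI)
  fix r c
  have "M r c * mvmult (mstar M) u c = (\<Sum>j\<in>UNIV. (M r c * mstar M c j) * u j)"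
    by (simp add: mvmult_def sum_distrib_left mult.assoc)
  also have "\<dots> \<le> (\<Sum>j\<in>UNIV. mstar M r j * u j)"
    by (intro sum_mono mult_right_mono mult_mstar_le_mstar assms zero_least)
  finally show "M r c * mvmult (mstar M) u c \<le> mvmult (mstar M) u r"
    by (simp add: mvmult_def)
qed

lemma mident_mult: "mident i j * a = (if i = j then a else 0)"
  by (simp add: mident_def)

lemma mvmult_mident: "mvmult mident x = (x :: 'n::finite \<Rightarrow> 'a::lin_idem_semifield)"
  by (simp add: fun_eq_iff mvmult_def mident_mult)

lemma mpow_1: "mpow M (Suc 0) = M"
  by (simp add: fun_eq_iff mmult_def mident_mult)

lemma mvmult_mmult: "mvmult (mmult A B) x = mvmult A (mvmult B x)"
proof
  fix i
  have "mvmult (mmult A B) x i = (\<Sum>j\<in>UNIV. \<Sum>l\<in>UNIV. A i l * (B l j * x j))"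
    by (simp add: mvmult_def mmult_def sum_distrib_right mult.assoc)
  also have "\<dots> = (\<Sum>l\<in>UNIV. \<Sum>j\<in>UNIV. A i l * (B l j * x j))"
    by (rule sum.swap)
  finally show "mvmult (mmult A B) x i = mvmult A (mvmult B x) i"
    by (simp add: mvmult_def sum_distrib_left)
qed

lemma mvmult_mono:
  fixes M :: "'n::finite \<Rightarrow> 'n \<Rightarrow> 'a::lin_idem_semifield"
  shows "x \<le> y \<Longrightarrow> mvmult M x \<le> mvmult M y"
  by (simp add: le_fun_def mvmult_def sum_mono mult_left_mono zero_least)

lemma mvmult_mstar:
  fixes M :: "'n::finite \<Rightarrow> 'n \<Rightarrow> 'a::lin_idem_semifield"
  shows "mvmult (mstar M) x i = (\<Sum>k<card (UNIV :: 'n set). mvmult (mpow M k) x i)"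
  unfolding mvmult_def mstar_def sum_distrib_right by (rule sum.swap)

lemma mvmult_mpow_le:
  fixes M :: "'n::finite \<Rightarrow> 'n \<Rightarrow> 'a::lin_idem_semifield"
  assumes x: "mvmult M x \<le> x"
  shows "mvmult (mpow M k) x \<le> x"
proof (induct k)
  case 0
  show ?case by (simp add: mvmult_mident)
next
  case (Suc k)
  have "mvmult (mpow M (Suc k)) x = mvmult (mpow M k) (mvmult M x)"
    by (simp add: mvmult_mmult)
  also have "\<dots> \<le> mvmult (mpow M k) x" using x by (rule mvmult_mono)
  finally show ?case using Suc by (rule order_trans)
qed

lemma mvmult_mstar_eq_if_le:
  fixes M :: "'n::finite \<Rightarrow> 'n \<Rightarrow> 'a::lin_idem_semifield"
  assumes x: "mvmult M x \<le> x"
  shows "mvmult (mstar M) x = x"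
proof
  fix i
  have "mvmult (mstar M) x i \<le> x i"
    using mvmult_mpow_le[OF x] by (simp add: mvmult_mstar sum_le_iff le_fun_def)
  moreover have "x i \<le> mvmult (mstar M) x i"
  proof -
    have "x i = mvmult (mpow M 0) x i" by (simp add: mvmult_mident)
    also have "\<dots> \<le> mvmult (mstar M) x i"
      unfolding mvmult_mstar by (rule le_sum_member) (simp_all add: finite_UNIV_card_ge_0)
    finally show ?thesis .
  qed
  ultimately show "mvmult (mstar M) x i = x i" by (rule order.antisym)
qed

lemma regular_mvmult_mstar:
  fixes M :: "'n::finite \<Rightarrow> 'n \<Rightarrow> 'a::lin_idem_semifield"
  assumes M: "\<forall>r c. M r c \<noteq> 0" and u: "u \<noteq> (\<lambda>_. 0)"
  shows "regular (mvmult (mstar M) u)"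
  unfolding regular_def
proof
  fix i
  obtain j where j: "u j \<noteq> 0" using u by auto
  have "mstar M i j \<noteq> 0"
  proof (cases "i = j")
    case True
    have "mpow M 0 i j \<le> mstar M i j" by (rule mpow_le_mstar) (simp add: finite_UNIV_card_ge_0)
    with True have "1 \<le> mstar M i j" by (simp add: mident_def)
    then show ?thesis by (metis order.antisym zero_least zero_neq_one)
  next
    case False
    then have "card {i, j} \<le> card (UNIV :: 'n set)" by (intro card_mono) auto
    with False have "mpow M (Suc 0) i j \<le> mstar M i j" by (intro mpow_le_mstar) simp
    then have "M i j \<le> mstar M i j" by (simp only: mpow_1)
    with M show ?thesis by (metis order.antisym zero_least)
  qed
  with j have "mstar M i j * u j \<noteq> 0" by simp
  moreover have "mstar M i j * u j \<le> mvmult (mstar M) u i"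
    unfolding mvmult_def by (rule le_sum_member) auto
  ultimately show "mvmult (mstar M) u i \<noteq> 0" using zero_least by (metis order.antisym)
qed

subsection \<open>The objective as a quadratic form\<close>

definition qform :: "('n::finite \<Rightarrow> 'n \<Rightarrow> 'a::lin_idem_semifield) \<Rightarrow> ('n \<Rightarrow> 'a) \<Rightarrow> 'a" where
  "qform M x = (\<Sum>r\<in>UNIV. \<Sum>c\<in>UNIV. inverse (x r) * M r c * x c)"

lemma spec_rad_le_qform:
  fixes M :: "'n::finite \<Rightarrow> 'n \<Rightarrow> 'a::lin_idem_semifield"
  assumes x: "regular x"
  shows "spec_rad M \<le> qform M x"
  unfolding spec_rad_le_iff
proof (intro allI impI)
  fix "is" :: "'n list"
  have entry: "inverse (x r) * M r c * x c \<le> qform M x" for r c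
  proof -
    have "inverse (x r) * M r c * x c \<le> (\<Sum>c\<in>UNIV. inverse (x r) * M r c * x c)"
      by (rule le_sum_member) auto
    also have "\<dots> \<le> qform M x" unfolding qform_def by (rule le_sum_member) auto
    finally show ?thesis .
  qed
  have "cycle_weight M is = cycle_weight (\<lambda>r c. inverse (x r) * M r c * x c) is"
    by (rule cycle_weight_diag_conj[OF x, symmetric])
  also have "\<dots> \<le> (\<Prod>j<length is. qform M x)"
    unfolding cycle_weight_def by (rule prod_mono_nonneg) (rule entry)
  finally show "cycle_weight M is \<le> qform M x ^ length is" by simp
qed

lemma qform_le_iff:
  fixes M :: "'n::finite \<Rightarrow> 'n \<Rightarrow> 'a::lin_idem_semifield"
  assumes x: "regular x" and m: "m \<noteq> 0"
  shows "qform M x \<le> m \<longleftrightarrow> mvmult (smult (inverse m) M) x \<le> x"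
proof -
  have "inverse (x r) * M r c * x c \<le> m \<longleftrightarrow> inverse m * M r c * x c \<le> x r" for r c
  proof -
    have xr: "x r \<noteq> 0" using x by (simp add: regular_def)
    then have "x r * inverse m \<noteq> 0" using m inverse_nonzero by simp
    then have "inverse (x r) * M r c * x c \<le> m
        \<longleftrightarrow> (x r * inverse m) * (inverse (x r) * M r c * x c) \<le> (x r * inverse m) * m"
      by (simp add: mult_left_le_cancel_nz)
    also have "(x r * inverse m) * (inverse (x r) * M r c * x c)
        = (x r * inverse (x r)) * (inverse m * M r c * x c)"
      by (simp add: ac_simps)
    also have "(x r * inverse m) * m = x r * (inverse m * m)"
      by (simp add: ac_simps)
    finally show ?thesis using xr m by (simp add: right_inverse_nz left_inverse_nz)
  qed
  then show ?thesis by (simp add: qform_def mvmult_le_iff smult_def sum_le_iff)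
qed

lemma mdist_outer_pinv_eq_qform:
  fixes A :: "'n::finite \<Rightarrow> 'n \<Rightarrow> 'a::lin_idem_semifield"
  assumes A: "mpinv A = A" and x: "regular x"
  shows "mdist A (outer_pinv x) = qform A x"
proof -
  have xnz: "x i \<noteq> 0" for i using x by (simp add: regular_def)
  let ?P = "outer_pinv x"
  have P: "?P r c = x r * inverse (x c)" for r c by (simp add: outer_pinv_def vpinv_def xnz)
  have P_recip: "mpinv ?P = ?P"
    by (simp add: fun_eq_iff mpinv_def P xnz inverse_nonzero inverse_mult_nz inverse_inverse_nz mult.commute)
  have "mtrace (mmult (mpinv ?P) A) = qform A x"
    unfolding P_recip mtrace_def mmult_def qform_def P by (subst sum.swap) (simp add: ac_simps)
  moreover have "mtrace (mmult (mpinv A) ?P) = qform A x"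
    unfolding A mtrace_def mmult_def qform_def P by (simp add: ac_simps)
  ultimately show ?thesis by (simp add: mdist_def add_idem)
qed

lemma weighted_mdist_eq_qform:
  fixes A :: "'i \<Rightarrow> 'n::finite \<Rightarrow> 'n \<Rightarrow> 'a::lin_idem_semifield"
  assumes A: "\<forall>i\<in>I. mpinv (A i) = A i" and x: "regular x" and I: "finite I"
  shows "(\<Sum>i\<in>I. w i * mdist (A i) (outer_pinv x)) = qform (\<lambda>r c. \<Sum>i\<in>I. w i * A i r c) x"
proof -
  have "(\<Sum>i\<in>I. w i * mdist (A i) (outer_pinv x)) = (\<Sum>i\<in>I. w i * qform (A i) x)"
    using A mdist_outer_pinv_eq_qform[OF _ x] by simp
  also have "\<dots> = qform (\<lambda>r c. \<Sum>i\<in>I. w i * A i r c) x"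
    unfolding qform_def sum_distrib_left sum_distrib_right
    by (subst sum.swap, rule sum.cong[OF refl], subst sum.swap) (simp add: ac_simps)
  finally show ?thesis .
qed

lemma spec_rad_nonzero:
  fixes B :: "'n::finite \<Rightarrow> 'n \<Rightarrow> 'a::lin_idem_semifield"
  assumes "B i i \<noteq> 0"
  shows "spec_rad B \<noteq> 0"
  using assms diag_le_spec_rad[of B i] zero_least by (metis order.antisym)

lemma qform_eq_spec_rad_iff:
  fixes B :: "'n::finite \<Rightarrow> 'n \<Rightarrow> 'a::lin_idem_semifield"
  assumes "spec_rad B \<noteq> 0" and x: "regular x"
  shows "qform B x = spec_rad B \<longleftrightarrow> mvmult (smult (inverse (spec_rad B)) B) x \<le> x"
  using spec_rad_le_qform[OF x, of B] qform_le_iff[OF x assms(1)] by (metis order.antisym order.refl)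

lemma qform_mvmult_mstar:
  fixes B :: "'n::finite \<Rightarrow> 'n \<Rightarrow> 'a::lin_idem_semifield"
  assumes B: "\<forall>r c. B r c \<noteq> 0" and u: "u \<noteq> (\<lambda>_. 0)"
  defines "C \<equiv> smult (inverse (spec_rad B)) B"
  shows "regular (mvmult (mstar C) u) \<and> qform B (mvmult (mstar C) u) = spec_rad B"
proof -
  have rad: "spec_rad B \<noteq> 0" using B spec_rad_nonzero by blast
  then have "\<forall>r c. C r c \<noteq> 0" using B inverse_nonzero by (simp add: C_def smult_def)
  then have "regular (mvmult (mstar C) u)" using regular_mvmult_mstar u by blast
  moreover have "mvmult C (mvmult (mstar C) u) \<le> mvmult (mstar C) u"
    unfolding C_def by (intro mvmult_mstar_le spec_rad_normalized_le_one rad)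
  ultimately show ?thesis using qform_eq_spec_rad_iff[OF rad] by (simp add: C_def)
qed

lemma qform_minimizers:
  fixes B :: "'n::finite \<Rightarrow> 'n \<Rightarrow> 'a::lin_idem_semifield"
  assumes B: "\<forall>r c. B r c \<noteq> 0"
  defines "C \<equiv> smult (inverse (spec_rad B)) B"
  shows "{x. regular x \<and> qform B x = spec_rad B} = {mvmult (mstar C) u | u. u \<noteq> (\<lambda>_. 0)}"
proof (intro equalityI subsetI)
  fix x assume "x \<in> {x. regular x \<and> qform B x = spec_rad B}"
  moreover have "spec_rad B \<noteq> 0" using B spec_rad_nonzero by blast
  ultimately have "regular x" "mvmult C x \<le> x" using qform_eq_spec_rad_iff by (auto simp: C_def)
  then have "x = mvmult (mstar C) x" "x \<noteq> (\<lambda>_. 0)"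
    by (simp_all add: mvmult_mstar_eq_if_le regular_def fun_eq_iff)
  then show "x \<in> {mvmult (mstar C) u | u. u \<noteq> (\<lambda>_. 0)}" by blast
next
  fix x assume "x \<in> {mvmult (mstar C) u | u. u \<noteq> (\<lambda>_. 0)}"
  then obtain u where "u \<noteq> (\<lambda>_. 0)" "x = mvmult (mstar C) u" by blast
  with qform_mvmult_mstar[OF B] show "x \<in> {x. regular x \<and> qform B x = spec_rad B}"
    by (simp add: C_def)
qed

theorem corollary3:
  fixes A :: "nat \<Rightarrow> ('n::finite \<Rightarrow> 'n \<Rightarrow> 'a::lin_idem_semifield)"
    and w :: "nat \<Rightarrow> 'a" and m :: nat
    and B :: "'n \<Rightarrow> 'n \<Rightarrow> 'a" and \<mu> :: 'a
  assumes recip: "\<forall>i\<in>{1..m}. mpinv (A i) = A i"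
    and B_def: "B = (\<lambda>r c. \<Sum>i\<in>{1..m}. w i * A i r c)"
    and B_nz: "\<forall>r c. B r c \<noteq> 0"
    and mu_def: "\<mu> = spec_rad B"
  shows "(\<exists>x. regular x \<and> (\<Sum>i\<in>{1..m}. w i * mdist (A i) (outer_pinv x)) = \<mu>)
    \<and> (\<forall>x. regular x \<longrightarrow> \<mu> \<le> (\<Sum>i\<in>{1..m}. w i * mdist (A i) (outer_pinv x)))
    \<and> {x. regular x \<and> (\<forall>y. regular y \<longrightarrow>
          (\<Sum>i\<in>{1..m}. w i * mdist (A i) (outer_pinv x))
            \<le> (\<Sum>i\<in>{1..m}. w i * mdist (A i) (outer_pinv y)))}
      = {mvmult (mstar (smult (inverse \<mu>) B)) u | u. u \<noteq> (\<lambda>_. 0)}"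
proof -
  let ?F = "\<lambda>x. \<Sum>i\<in>{1..m}. w i * mdist (A i) (outer_pinv x)"
  have F: "?F x = qform B x" if "regular x" for x
    unfolding B_def using weighted_mdist_eq_qform[OF recip that] by simp
  have lower: "\<mu> \<le> ?F x" if "regular x" for x
    using F spec_rad_le_qform mu_def that by metis
  obtain x0 where x0: "regular x0" "?F x0 = \<mu>"
    using qform_mvmult_mstar[OF B_nz, of "\<lambda>_. 1"] F mu_def by (metis zero_neq_one)
  have "{x. regular x \<and> (\<forall>y. regular y \<longrightarrow> ?F x \<le> ?F y)} = {x. regular x \<and> qform B x = \<mu>}"
    using x0 lower F by (metis (lifting) order.antisym order.refl)
  also have "\<dots> = {mvmult (mstar (smult (inverse \<mu>) B)) u | u. u \<noteq> (\<lambda>_. 0)}"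
    unfolding mu_def by (rule qform_minimizers[OF B_nz])
  finally show ?thesis using x0 lower by auto
qed

end
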